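(* Let $\mathcal{F}=\langle Q_i:i<\omega\rangle$ be a sequence of quantifiers on $\mathbb{N}$, each of which is a finite boolean combination of principal quantifiers $Q_{A_{i,k}}$ (with $A_{i,k}\subseteq\mathbb{N}^{d_i}$). Let $\mathrm{Aut}(\mathcal{F})$ be the group of permutations of $\mathbb{N}$ fixing every $Q_i$. Then $\mathrm{Aut}(\mathcal{F})$ is a closed subgroup of $S_\infty$, and every orbit of $\mathrm{Aut}(\mathcal{F})$ on $\mathbb{N}^{<\omega}$ is definable in $\mathscr{L}_{\omega_1\omega}(\mathcal{F})$.
   Context: For $A\subseteq\mathbb{N}^d$, the principal quantifier $Q_A=\{X\subseteq\mathbb{N}^d:A\subseteq X\}$ is a quantifier of type $\langle d\rangle$ on $\mathbb{N}$. A permutation $g$ of $\mathbb{N}$ acts coordinatewise on tuples and on subsets by $g(X)=\{g(x):x\in X\}$; $g$ fixes a quantifier $Q$ of type $\langle d\rangle$ if $X\in Q\iff g(X)\in Q$ for all $X\subseteq\mathbb{N}^d$. $S_\infty$ is the group of permutations of $\mathbb{N}$ with the topology of pointwise convergence. $\mathscr{L}_{\omega_1\omega}(\mathcal{F})$ extends $\mathscr{L}_{\omega_1\omega}$ by formulas $Q_ix\,\varphi(x,y)$ for each $i$, with $\mathbb{N}\models Q_ix\,\varphi(x,b)$ iff $\{a\in\mathbb{N}^{d_i}:\mathbb{N}\models\varphi(a,b)\}\in Q_i$. A set of tuples is definable in $\mathscr{L}_{\omega_1\omega}(\mathcal{F})$ if some parameter-free formula whose only non-logical symbols are the $Q_i$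 defines it in $\mathbb{N}$. *)

theory Defs
  imports "HOL-Analysis.Analysis" "HOL-Algebra.Bij"
begin

definition tuples :: "nat \<Rightarrow> nat list set" where
  "tuples d = {xs. length xs = d}"

text \<open>Quantifiers of type d on N: families of subsets of N^d.
  The principal quantifier Q_A = {X subset of N^d. A subset of X}.\<close>

definition principal :: "nat \<Rightarrow> nat list set \<Rightarrow> nat list set set" where
  "principal d A = {X. X \<subseteq> tuples d \<and> A \<subseteq> X}"

datatype bcomb = BAtom nat | BNot bcomb | BAnd bcomb bcomb | BOr bcomb bcomb

primrec bquant :: "nat \<Rightarrow> (nat \<Rightarrow> nat list set) \<Rightarrow> bcomb \<Rightarrow> nat list set set" where
  "bquant d A (BAtom k) = principal d (A k)"
| "bquant d A (BNot b) = Pow (tuples d) - bquant d A b"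
| "bquant d A (BAnd b c) = bquant d A b \<inter> bquant d A c"
| "bquant d A (BOr b c) = bquant d A b \<union> bquant d A c"

definition fin_bool_comb_principal :: "nat \<Rightarrow> nat list set set \<Rightarrow> bool" where
  "fin_bool_comb_principal d Q \<longleftrightarrow>
     (\<exists>A b. (\<forall>k. A k \<subseteq> tuples d) \<and> Q = bquant d A b)"

definition fixes_quant :: "nat \<Rightarrow> (nat \<Rightarrow> nat) \<Rightarrow> nat list set set \<Rightarrow> bool" where
  "fixes_quant d g Q \<longleftrightarrow>
     (\<forall>X. X \<subseteq> tuples d \<longrightarrow> (X \<in> Q \<longleftrightarrow> (map g) ` X \<in> Q))"

definition Aut :: "(nat \<Rightarrow> nat) \<Rightarrow> (nat \<Rightarrow> nat list set set) \<Rightarrow> (nat \<Rightarrow> nat) set" where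
  "Aut d Q = {g. bij g \<and> (\<forall>i. fixes_quant (d i) g (Q i))}"

text \<open>S_infinity: permutations of N, as a subspace of N^N with the product
  topology (N carries its discrete metric topology); this is the topology of
  pointwise convergence.\<close>

definition Sinf :: "(nat \<Rightarrow> nat) set" where
  "Sinf = {g. bij g}"

text \<open>Syntax of L_{omega_1 omega}(F): variables are natural numbers;
  conjunctions are countable (indexed by nat); Qf i xs phi is the formula
  Q_i xs phi binding the tuple of variables xs.\<close>

datatype form =
    FEq nat nat
  | FNeg form
  | FConj "nat \<Rightarrow> form"
  | FEx nat form
  | FQ nat "nat list" form

primrec fv :: "form \<Rightarrow> nat set" where
  "fv (FEq x y) = {x, y}"
| "fv (FNeg \<phi>) = fv \<phi>"
| "fv (FConj \<Phi>) = (\<Union>k. fv (\<Phi> k))"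
| "fv (FEx x \<phi>) = fv \<phi> - {x}"
| "fv (FQ i xs \<phi>) = fv \<phi> - set xs"

definition upd_list :: "(nat \<Rightarrow> nat) \<Rightarrow> nat list \<Rightarrow> nat list \<Rightarrow> (nat \<Rightarrow> nat)" where
  "upd_list e xs as = foldr (\<lambda>(v, a) f. f(v := a)) (zip xs as) e"

text \<open>Satisfaction in the structure N (only non-logical symbols: the Q i).
  Ill-formed quantifier applications (wrong arity or repeated variables) are false.\<close>

primrec sat :: "(nat \<Rightarrow> nat) \<Rightarrow> (nat \<Rightarrow> nat list set set) \<Rightarrow> form \<Rightarrow> (nat \<Rightarrow> nat) \<Rightarrow> bool" where
  "sat d Q (FEq x y) e = (e x = e y)"
| "sat d Q (FNeg \<phi>) e = (\<not> sat d Q \<phi> e)"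
| "sat d Q (FConj \<Phi>) e = (\<forall>k. sat d Q (\<Phi> k) e)"
| "sat d Q (FEx x \<phi>) e = (\<exists>a. sat d Q \<phi> (e(x := a)))"
| "sat d Q (FQ i xs \<phi>) e =
     (length xs = d i \<and> distinct xs \<and>
      {as \<in> tuples (d i). sat d Q \<phi> (upd_list e xs as)} \<in> Q i)"

definition tuple_assign :: "nat list \<Rightarrow> nat \<Rightarrow> nat" where
  "tuple_assign b v = (if v < length b then b ! v else 0)"

definition definable :: "(nat \<Rightarrow> nat) \<Rightarrow> (nat \<Rightarrow> nat list set set) \<Rightarrow> nat \<Rightarrow> nat list set \<Rightarrow> bool" where
  "definable d Q n S \<longleftrightarrow>
     (\<exists>\<phi>. fv \<phi> \<subseteq> {..<n} \<and> S = {b \<in> tuples n. sat d Q \<phi> (tuple_assign b)})"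

definition orbit_tuple :: "(nat \<Rightarrow> nat) set \<Rightarrow> nat list \<Rightarrow> nat list set" where
  "orbit_tuple G a = {map g a | g. g \<in> G}"

end

theory Submission
  imports Defs "HOL-Library.Sublist"
begin

text \<open>
  The key observation is that a finite boolean combination Q of principal
  quantifiers only "sees" finitely many witnesses: whether X belongs to Q depends only on
  which of the finitely many sets A_k are contained in X, so X may be replaced by a
  cofinite set tuples d - W with W finite.  Hence a permutation g fixes Q as soon as it
  preserves Q on all cofinite sets.  This has two consequences.
  (1) Closedness: preserving Q on tuples d - W depends only on g restricted to the
      finitely many numbers occurring in W, so the complement of Aut(F) is open in S_inf.
  (2) Orbits: "tuples d - W is in Q_i" is expressed by an L_{omega_1 omega}(F) formula
      about any tuple c listing the entries of W.  Two tuples a, b of the same type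
      (satisfying the same formulas) can be extended back and forth to a bijection g all
      of whose finite restrictions preserve types; so g is in Aut(F) and maps a to b.
      Conversely automorphisms preserve satisfaction.  Thus orbits are type classes, and
      a type class is defined by the countable conjunction of formulas separating a from
      the countably many tuples of other types.
\<close>

lemma bij_map: "bij g \<Longrightarrow> bij (map g)"
  unfolding bij_def by (metis inj_mapI lists_UNIV lists_image)

lemma map_inv_cancel:
  assumes "bij g"
  shows "map g (map (inv_into UNIV g) w) = w" "map (inv_into UNIV g) (map g w) = w"
  using assms by (simp_all add: map_idI bij_is_surj bij_is_inj surj_f_inv_f)

lemma map_tuples: "X \<subseteq> tuples d \<Longrightarrow> map g ` X \<subseteq> tuples d"
  by (auto simp: tuples_def)

lemma map_image_tuples:
  assumes "bij g"
  shows "map g ` tuples d = tuples d"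
proof
  show "tuples d \<subseteq> map g ` tuples d"
    by (metis (mono_tags) assms image_eqI length_map map_inv_cancel(1) mem_Collect_eq subsetI tuples_def)
qed (auto simp: tuples_def)

lemma fixes_quant_comp:
  assumes "fixes_quant d g Q" "fixes_quant d f Q"
  shows "fixes_quant d (g \<circ> f) Q"
  unfolding fixes_quant_def
proof (intro allI impI)
  fix X assume X: "X \<subseteq> tuples d"
  have "map (g \<circ> f) ` X = map g ` (map f ` X)" by (auto simp: image_image)
  then show "X \<in> Q \<longleftrightarrow> map (g \<circ> f) ` X \<in> Q"
    using assms X map_tuples[OF X, of f] unfolding fixes_quant_def by metis
qed

lemma fixes_quant_inv:
  assumes "bij g" "fixes_quant d g Q"
  shows "fixes_quant d (inv_into UNIV g) Q"
  unfolding fixes_quant_def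
proof (intro allI impI)
  fix X assume X: "X \<subseteq> tuples d"
  have "map g ` (map (inv_into UNIV g) ` X) = X"
    by (simp add: image_image map_inv_cancel[OF assms(1)] del: map_map)
  then show "X \<in> Q \<longleftrightarrow> map (inv_into UNIV g) ` X \<in> Q"
    using assms(2) map_tuples[OF X, of "inv_into UNIV g"] unfolding fixes_quant_def by metis
qed

lemma subgroup_Aut: "subgroup (Aut d Q) (BijGroup (UNIV :: nat set))"
proof (rule group.subgroupI[OF group_BijGroup])
  have Bij_UNIV: "Bij UNIV = {g :: nat \<Rightarrow> nat. bij g}"
    by (auto simp: Bij_def)
  show "Aut d Q \<subseteq> carrier (BijGroup UNIV)"
    by (auto simp: BijGroup_def Bij_UNIV Aut_def)
  have "id \<in> Aut d Q" by (auto simp: Aut_def fixes_quant_def)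
  then show "Aut d Q \<noteq> {}" by blast
  fix a b assume a: "a \<in> Aut d Q" and b: "b \<in> Aut d Q"
  then have "inv\<^bsub>BijGroup UNIV\<^esub> a = inv_into UNIV a"
    using inv_BijGroup[of a UNIV] by (auto simp: Bij_UNIV Aut_def)
  then show "inv\<^bsub>BijGroup UNIV\<^esub> a \<in> Aut d Q"
    using a by (auto simp: Aut_def bij_imp_bij_inv fixes_quant_inv)
  have "a \<otimes>\<^bsub>BijGroup UNIV\<^esub> b = a \<circ> b"
    using a b by (auto simp: BijGroup_def Bij_UNIV Aut_def compose_def)
  then show "a \<otimes>\<^bsub>BijGroup UNIV\<^esub> b \<in> Aut d Q"
    using a b by (auto simp: Aut_def bij_comp fixes_quant_comp)
qed

definition preserves_cofinite :: "nat \<Rightarrow> nat list set set \<Rightarrow> (nat \<Rightarrow> nat) \<Rightarrow> nat list set \<Rightarrow> bool" where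
  "preserves_cofinite d Q g W \<longleftrightarrow> (tuples d - W \<in> Q \<longleftrightarrow> tuples d - map g ` W \<in> Q)"

lemma fixes_quant_preserves_cofinite:
  assumes "bij g" "fixes_quant d g Q" "W \<subseteq> tuples d"
  shows "preserves_cofinite d Q g W"
proof -
  have "map g ` (tuples d - W) = tuples d - map g ` W"
    using bij_map[OF assms(1)] map_image_tuples[OF assms(1)]
    by (metis bij_def image_set_diff)
  then show ?thesis using assms(2) unfolding fixes_quant_def preserves_cofinite_def by auto
qed

primrec atoms :: "bcomb \<Rightarrow> nat set" where
  "atoms (BAtom k) = {k}"
| "atoms (BNot b) = atoms b"
| "atoms (BAnd b c) = atoms b \<union> atoms c"
| "atoms (BOr b c) = atoms b \<union> atoms c"

lemma finite_atoms: "finite (atoms b)"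
  by (induction b) auto

lemma bquant_cong:
  assumes "X \<subseteq> tuples d" "Y \<subseteq> tuples d" "\<And>k. k \<in> atoms b \<Longrightarrow> A k \<subseteq> X \<longleftrightarrow> A k \<subseteq> Y"
  shows "X \<in> bquant d A b \<longleftrightarrow> Y \<in> bquant d A b"
  using assms by (induction b) (auto simp: principal_def)

text \<open>Cofinite reduction: there is a finite set W of non-members of X (one witness in A_k - X
  for each atom A_k not contained in X) such that X may be replaced by tuples d - W' for any
  set W' of non-members of X containing W.\<close>

lemma bquant_cofinite_witness:
  assumes X: "X \<subseteq> tuples d" and A: "\<forall>k. A k \<subseteq> tuples d"
  obtains W where "finite W" "W \<subseteq> tuples d - X"
    "\<And>W'. W \<subseteq> W' \<Longrightarrow> W' \<subseteq> tuples d - X \<Longrightarrow> X \<in> bquant d A b \<longleftrightarrow> tuples d - W' \<in> bquant d A b"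
proof
  define K where "K = {k \<in> atoms b. \<not> A k \<subseteq> X}"
  define wit where "wit k = (SOME w. w \<in> A k - X)" for k
  have wit: "wit k \<in> A k - X" if "k \<in> K" for k
    using that someI_ex[of "\<lambda>w. w \<in> A k - X"] unfolding K_def wit_def by blast
  show "finite (wit ` K)" using finite_atoms by (simp add: K_def)
  show "wit ` K \<subseteq> tuples d - X" using wit A by blast
  fix W' assume W': "wit ` K \<subseteq> W'" "W' \<subseteq> tuples d - X"
  show "X \<in> bquant d A b \<longleftrightarrow> tuples d - W' \<in> bquant d A b"
  proof (rule bquant_cong[OF X])
    fix k assume "k \<in> atoms b"
    then show "A k \<subseteq> X \<longleftrightarrow> A k \<subseteq> tuples d - W'"
      using W' wit[of k] X by (auto simp: K_def)
  qed auto
qed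

text \<open>A permutation preserving a boolean combination of principal quantifiers on all cofinite
  sets fixes it: choose witnesses for X and for its image simultaneously.\<close>

lemma fixes_quant_bquant:
  assumes g: "bij g" and A: "\<forall>k. A k \<subseteq> tuples d"
    and cof: "\<And>W. finite W \<Longrightarrow> W \<subseteq> tuples d \<Longrightarrow> preserves_cofinite d (bquant d A b) g W"
  shows "fixes_quant d g (bquant d A b)"
  unfolding fixes_quant_def
proof (intro allI impI)
  fix X assume X: "X \<subseteq> tuples d"
  let ?Q = "bquant d A b" and ?gX = "map g ` X"
  obtain W1 where W1: "finite W1" "W1 \<subseteq> tuples d - X"
    "\<And>W'. W1 \<subseteq> W' \<Longrightarrow> W' \<subseteq> tuples d - X \<Longrightarrow> X \<in> ?Q \<longleftrightarrow> tuples d - W' \<in> ?Q"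
    using bquant_cofinite_witness[OF X A] by metis
  obtain W2 where W2: "finite W2" "W2 \<subseteq> tuples d - ?gX"
    "\<And>W'. W2 \<subseteq> W' \<Longrightarrow> W' \<subseteq> tuples d - ?gX \<Longrightarrow> ?gX \<in> ?Q \<longleftrightarrow> tuples d - W' \<in> ?Q"
    using bquant_cofinite_witness[OF map_tuples[OF X] A] by metis
  define W where "W = W1 \<union> map (inv_into UNIV g) ` W2"
  have gW: "map g ` W = map g ` W1 \<union> W2"
    by (simp add: W_def image_Un image_image map_inv_cancel[OF g] del: map_map)
  have "map (inv_into UNIV g) ` W2 \<subseteq> tuples d - X"
  proof
    fix v assume "v \<in> map (inv_into UNIV g) ` W2"
    then obtain w where w: "w \<in> W2" "v = map (inv_into UNIV g) w" by blast
    then have "map g v = w" by (simp add: map_inv_cancel[OF g] del: map_map)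
    then have "v \<notin> X" using w W2(2) by blast
    then show "v \<in> tuples d - X" using w W2(2) by (auto simp: tuples_def)
  qed
  then have W: "W1 \<subseteq> W" "W \<subseteq> tuples d - X" using W1(2) by (auto simp: W_def)
  have "map g ` W1 \<subseteq> tuples d - ?gX"
    using W1(2) map_tuples[of W1 d g] inj_mapI[OF bij_is_inj[OF g]] by (auto dest: injD)
  then have gW': "W2 \<subseteq> map g ` W" "map g ` W \<subseteq> tuples d - ?gX" using W2(2) gW by auto
  have "finite W" using W1(1) W2(1) by (simp add: W_def)
  then have "preserves_cofinite d ?Q g W" using cof W(2) by blast
  then show "X \<in> ?Q \<longleftrightarrow> ?gX \<in> ?Q"
    using W1(3)[OF W] W2(3)[OF gW'] unfolding preserves_cofinite_def by blast
qed

lemma Aut_iff_preserves_cofinite: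
  assumes hyp: "\<forall>i. fin_bool_comb_principal (d i) (Q i)" and g: "bij g"
  shows "g \<in> Aut d Q \<longleftrightarrow>
    (\<forall>i W. finite W \<longrightarrow> W \<subseteq> tuples (d i) \<longrightarrow> preserves_cofinite (d i) (Q i) g W)"
proof
  assume "g \<in> Aut d Q"
  then show "\<forall>i W. finite W \<longrightarrow> W \<subseteq> tuples (d i) \<longrightarrow> preserves_cofinite (d i) (Q i) g W"
    using fixes_quant_preserves_cofinite g by (auto simp: Aut_def)
next
  assume cof: "\<forall>i W. finite W \<longrightarrow> W \<subseteq> tuples (d i) \<longrightarrow> preserves_cofinite (d i) (Q i) g W"
  have "fixes_quant (d i) g (Q i)" for i
  proof -
    obtain A b where A: "\<forall>k. A k \<subseteq> tuples (d i)" and Qi: "Q i = bquant (d i) A b"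
      using hyp unfolding fin_bool_comb_principal_def by blast
    show ?thesis unfolding Qi using fixes_quant_bquant[OF g A] cof Qi by metis
  qed
  then show "g \<in> Aut d Q" using g by (simp add: Aut_def)
qed

lemma open_finitely_determined:
  fixes P :: "(nat \<Rightarrow> nat) \<Rightarrow> bool"
  assumes "finite E" and "\<And>h h'. P h \<Longrightarrow> (\<forall>x\<in>E. h' x = h x) \<Longrightarrow> P h'"
  shows "open {h. P h}"
proof (subst open_subopen, intro ballI)
  fix h assume "h \<in> {h. P h}"
  define N where "N = {f :: nat \<Rightarrow> nat. \<forall>x\<in>E. f (id x) \<in> {h x}}"
  have "open N" unfolding N_def
    by (rule product_topology_basis'[OF assms(1)]) (simp add: open_discrete)
  moreover have "h \<in> N" "N \<subseteq> {h. P h}"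
    using \<open>h \<in> {h. P h}\<close> assms(2) by (auto simp: N_def)
  ultimately show "\<exists>T. open T \<and> h \<in> T \<and> T \<subseteq> {h. P h}" by blast
qed

lemma preserves_cofinite_local:
  assumes "\<forall>w\<in>W. \<forall>x\<in>set w. h' x = h x"
  shows "preserves_cofinite d Q h' W \<longleftrightarrow> preserves_cofinite d Q h W"
proof -
  have "map h' ` W = map h ` W" using assms by (auto intro!: image_cong map_cong)
  then show ?thesis by (simp add: preserves_cofinite_def)
qed

text \<open>Aut(F) is closed in S_inf: its complement is a union of basic open sets.\<close>

lemma closed_Aut:
  assumes hyp: "\<forall>i. fin_bool_comb_principal (d i) (Q i)"
  shows "closedin (top_of_set Sinf) (Aut d Q)"
proof -
  define Bad where "Bad = (\<Union>i. \<Union>W \<in> {W. finite W \<and> W \<subseteq> tuples (d i)}.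
    {h. \<not> preserves_cofinite (d i) (Q i) h W})"
  have "open {h. \<not> preserves_cofinite (d i) (Q i) h W}" if "finite W" for i W
  proof (rule open_finitely_determined)
    show "finite (\<Union> (set ` W))" using that by simp
  qed (use preserves_cofinite_local in blast)
  then have "open Bad" unfolding Bad_def by blast
  moreover have "Sinf - Aut d Q = Sinf \<inter> Bad"
    using Aut_iff_preserves_cofinite[OF hyp] by (auto simp: Sinf_def Bad_def)
  ultimately have "openin (top_of_set Sinf) (Sinf - Aut d Q)"
    unfolding openin_open by blast
  moreover have "Aut d Q \<subseteq> Sinf" by (auto simp: Aut_def Sinf_def)
  ultimately show ?thesis unfolding closedin_def by simp
qed

lemma upd_list_notin: "v \<notin> set xs \<Longrightarrow> upd_list e xs as v = e v"
proof (induction xs arbitrary: as)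
  case (Cons x xs)
  then show ?case by (cases as) (auto simp: upd_list_def)
qed (simp add: upd_list_def)

lemma upd_list_in:
  "length as = length xs \<Longrightarrow> v \<in> set xs \<Longrightarrow> upd_list e xs as v = upd_list e' xs as v"
proof (induction xs arbitrary: as)
  case (Cons x xs)
  then show ?case by (cases as) (auto simp: upd_list_def)
qed simp

lemma upd_list_nth:
  "length as = length xs \<Longrightarrow> distinct xs \<Longrightarrow> l < length xs \<Longrightarrow> upd_list e xs as (xs ! l) = as ! l"
proof (induction xs arbitrary: as l)
  case (Cons x xs)
  then show ?case by (cases as; cases l) (auto simp: upd_list_def)
qed simp

lemma upd_list_comp: "g \<circ> upd_list e xs as = upd_list (g \<circ> e) xs (map g as)"
proof (induction xs arbitrary: as)
  case (Cons x xs)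
  then show ?case by (cases as) (auto simp: upd_list_def fun_eq_iff)
qed (simp add: upd_list_def)

lemma upd_list_block:
  assumes "length as = D"
  shows "upd_list e [N..<N + D] as v = (if N \<le> v \<and> v < N + D then as ! (v - N) else e v)"
proof (cases "N \<le> v \<and> v < N + D")
  case True
  then have "upd_list e [N..<N + D] as ([N..<N + D] ! (v - N)) = as ! (v - N)"
    using assms by (intro upd_list_nth) auto
  then show ?thesis using True by simp
next
  case False
  then have "v \<notin> set [N..<N + D]" by auto
  then show ?thesis unfolding if_not_P[OF False] by (rule upd_list_notin)
qed

lemma sat_cong:
  assumes "\<forall>v\<in>fv \<phi>. e v = e' v"
  shows "sat d Q \<phi> e \<longleftrightarrow> sat d Q \<phi> e'"
  using assms
proof (induction \<phi> arbitrary: e e')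
  case (FConj \<Phi>)
  then show ?case by simp (metis rangeI)
next
  case (FEx x \<phi>)
  then have "sat d Q \<phi> (e(x := a)) \<longleftrightarrow> sat d Q \<phi> (e'(x := a))" for a
    by (intro FEx.IH) auto
  then show ?case by simp
next
  case (FQ i xs \<phi>)
  have "sat d Q \<phi> (upd_list e xs as) \<longleftrightarrow> sat d Q \<phi> (upd_list e' xs as)"
    if "length as = length xs" for as
  proof (rule FQ.IH, intro ballI)
    fix v assume "v \<in> fv \<phi>"
    then show "upd_list e xs as v = upd_list e' xs as v"
      using FQ.prems upd_list_in[OF that] upd_list_notin by (cases "v \<in> set xs") auto
  qed
  then have "length xs = d i \<Longrightarrow> {as \<in> tuples (d i). sat d Q \<phi> (upd_list e xs as)} =
      {as \<in> tuples (d i). sat d Q \<phi> (upd_list e' xs as)}"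
    by (auto simp: tuples_def)
  then show ?case by auto
qed simp_all

lemma Collect_tuples_map:
  assumes g: "bij g" and P: "\<And>bs. P (map g bs) \<longleftrightarrow> P' bs"
  shows "{as \<in> tuples D. P as} = map g ` {as \<in> tuples D. P' as}"
proof (intro equalityI subsetI)
  fix as assume as: "as \<in> {as \<in> tuples D. P as}"
  define bs where "bs = map (inv_into UNIV g) as"
  have as_bs: "as = map g bs"
    by (simp add: bs_def map_inv_cancel[OF g] del: map_map)
  have "bs \<in> {as \<in> tuples D. P' as}"
    using as unfolding as_bs by (simp add: tuples_def P)
  then show "as \<in> map g ` {as \<in> tuples D. P' as}" using as_bs by blast
qed (auto simp: tuples_def P)

lemma sat_Aut:
  assumes "g \<in> Aut d Q"
  shows "sat d Q \<phi> (g \<circ> e) \<longleftrightarrow> sat d Q \<phi> e"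
proof -
  have g: "bij g" and fix_Q: "\<And>i. fixes_quant (d i) g (Q i)"
    using assms by (auto simp: Aut_def)
  show ?thesis
  proof (induction \<phi> arbitrary: e)
    case (FEq x y)
    then show ?case using g by (simp add: bij_is_inj inj_eq)
  next
    case (FEx x \<phi>)
    have "g (inv_into UNIV g a) = a" for a
      using g by (simp add: bij_is_surj surj_f_inv_f)
    then have ex_g: "(\<exists>a. R a) \<longleftrightarrow> (\<exists>a. R (g a))" for R :: "nat \<Rightarrow> bool"
      by metis
    have "(\<exists>a. sat d Q \<phi> ((g \<circ> e)(x := a))) \<longleftrightarrow> (\<exists>a. sat d Q \<phi> ((g \<circ> e)(x := g a)))"
      by (rule ex_g)
    also have "\<dots> \<longleftrightarrow> (\<exists>a. sat d Q \<phi> (g \<circ> e(x := a)))"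
      by (simp add: fun_upd_comp)
    also have "\<dots> \<longleftrightarrow> (\<exists>a. sat d Q \<phi> (e(x := a)))"
      by (simp only: FEx.IH)
    finally show ?case by (simp only: sat.simps)
  next
    case (FQ i xs \<phi>)
    define S where "S = {as \<in> tuples (d i). sat d Q \<phi> (upd_list e xs as)}"
    have sat_map: "sat d Q \<phi> (upd_list (g \<circ> e) xs (map g as)) \<longleftrightarrow> sat d Q \<phi> (upd_list e xs as)" for as
      by (simp only: upd_list_comp[symmetric] FQ.IH)
    have image_S: "{as \<in> tuples (d i). sat d Q \<phi> (upd_list (g \<circ> e) xs as)} = map g ` S"
      unfolding S_def using g sat_map by (rule Collect_tuples_map)
    have "S \<subseteq> tuples (d i)" by (auto simp: S_def)
    then have "S \<in> Q i \<longleftrightarrow> map g ` S \<in> Q i"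
      using fix_Q[of i] unfolding fixes_quant_def by blast
    moreover have "sat d Q (FQ i xs \<phi>) (g \<circ> e) \<longleftrightarrow> length xs = d i \<and> distinct xs \<and> map g ` S \<in> Q i"
      by (simp only: sat.simps image_S)
    moreover have "sat d Q (FQ i xs \<phi>) e \<longleftrightarrow> length xs = d i \<and> distinct xs \<and> S \<in> Q i"
      by (simp only: sat.simps S_def)
    ultimately show ?case by blast
  qed simp_all
qed

definition FTrue :: form where
  "FTrue = FEx 0 (FEq 0 0)"

lemma sat_FTrue [simp]: "sat d Q FTrue e" and fv_FTrue [simp]: "fv FTrue = {}"
  by (auto simp: FTrue_def)

definition conj_over :: "'a :: countable set \<Rightarrow> ('a \<Rightarrow> form) \<Rightarrow> form" where
  "conj_over S \<phi> = FConj (\<lambda>k. if from_nat k \<in> S then \<phi> (from_nat k) else FTrue)"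

lemma sat_conj_over: "sat d Q (conj_over S \<phi>) e \<longleftrightarrow> (\<forall>x\<in>S. sat d Q (\<phi> x) e)"
proof (intro iffI ballI)
  fix x assume "sat d Q (conj_over S \<phi>) e" "x \<in> S"
  then show "sat d Q (\<phi> x) e"
    unfolding conj_over_def sat.simps by (metis from_nat_to_nat)
qed (simp add: conj_over_def)

lemma fv_conj_over: "fv (conj_over S \<phi>) \<subseteq> (\<Union>x\<in>S. fv (\<phi> x))"
  by (auto simp: conj_over_def split: if_splits)

lemma bij_from_relation:
  assumes consistent: "\<And>p q p' q'. (p, q) \<in> R \<Longrightarrow> (p', q') \<in> R \<Longrightarrow> p = p' \<longleftrightarrow> q = q'"
    and total: "\<And>p. \<exists>q. (p, q) \<in> R" and onto: "\<And>q. \<exists>p. (p, q) \<in> R"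
  shows "\<exists>g. bij g \<and> (\<forall>p q. (p, q) \<in> R \<longrightarrow> q = g p)"
proof -
  define g where "g p = (SOME q. (p, q) \<in> R)" for p
  have g_R: "(p, g p) \<in> R" for p
    unfolding g_def using total by (rule someI_ex)
  have "bij g"
  proof (rule bijI)
    show "inj g" using consistent g_R by (metis injI)
    show "surj g" using consistent g_R onto by (metis surjI)
  qed
  moreover have "q = g p" if "(p, q) \<in> R" for p q
    using consistent[OF that g_R[of p]] by simp
  ultimately show ?thesis by blast
qed

lemma prefix_zip_mono:
  assumes "prefix xs xs'" "prefix ys ys'" "length xs = length ys"
  shows "set (zip xs ys) \<subseteq> set (zip xs' ys')"
proof -
  obtain u v where "xs' = xs @ u" "ys' = ys @ v" using assms(1,2) by (meson prefixE)
  then show ?thesis by (simp add: zip_append assms(3))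
qed

lemma prefix_chain_mono:
  assumes "\<And>k. prefix (X k) (X (Suc k))" "k \<le> K"
  shows "prefix (X k) (X K)"
  using assms(2)
proof (induction K rule: dec_induct)
  case (step K)
  then show ?case using assms(1)[of K] prefix_order.trans by blast
qed simp

lemma limit_bijection:
  fixes X Y :: "nat \<Rightarrow> 'a list"
  assumes prefix_X: "\<And>k. prefix (X k) (X (Suc k))" and prefix_Y: "\<And>k. prefix (Y k) (Y (Suc k))"
    and len: "\<And>k. length (X k) = length (Y k)"
    and eq: "\<And>k i j. i < length (X k) \<Longrightarrow> j < length (X k) \<Longrightarrow> X k ! i = X k ! j \<longleftrightarrow> Y k ! i = Y k ! j"
    and cover_X: "\<And>x. \<exists>k. x \<in> set (X k)" and cover_Y: "\<And>y. \<exists>k. y \<in> set (Y k)"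
  shows "\<exists>g. bij g \<and> (\<forall>k. Y k = map g (X k))"
proof -
  define R where "R = (\<Union>k. set (zip (X k) (Y k)))"
  have zip_mono: "set (zip (X k) (Y k)) \<subseteq> set (zip (X K) (Y K))" if "k \<le> K" for k K
    using prefix_zip_mono[OF prefix_chain_mono[of X, OF prefix_X that]
        prefix_chain_mono[of Y, OF prefix_Y that] len] .
  have stage_consistent: "p = p' \<longleftrightarrow> q = q'"
    if "(p, q) \<in> set (zip (X k) (Y k))" "(p', q') \<in> set (zip (X k) (Y k))" for k p q p' q'
    using that eq[of _ k] by (auto simp: in_set_zip)
  have "\<exists>g. bij g \<and> (\<forall>p q. (p, q) \<in> R \<longrightarrow> q = g p)"
  proof (rule bij_from_relation)
    fix p q p' q' assume "(p, q) \<in> R" "(p', q') \<in> R"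
    then obtain k k' where "(p, q) \<in> set (zip (X k) (Y k))" "(p', q') \<in> set (zip (X k') (Y k'))"
      by (auto simp: R_def)
    then have "(p, q) \<in> set (zip (X (max k k')) (Y (max k k')))"
      "(p', q') \<in> set (zip (X (max k k')) (Y (max k k')))"
      using zip_mono[of k "max k k'"] zip_mono[of k' "max k k'"] by auto
    then show "p = p' \<longleftrightarrow> q = q'" by (rule stage_consistent)
  next
    fix p
    obtain k where "p \<in> set (X k)" using cover_X by blast
    then obtain q where "(p, q) \<in> set (zip (X k) (Y k))"
      using in_set_impl_in_set_zip1[OF len] by metis
    then show "\<exists>q. (p, q) \<in> R" by (auto simp: R_def)
  next
    fix q
    obtain k where "q \<in> set (Y k)" using cover_Y by blast
    then obtain p where "(p, q) \<in> set (zip (X k) (Y k))"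
      using in_set_impl_in_set_zip2[OF len] by metis
    then show "\<exists>p. (p, q) \<in> R" by (auto simp: R_def)
  qed
  then obtain g where g: "bij g" "\<And>p q. (p, q) \<in> R \<Longrightarrow> q = g p" by blast
  have "Y k = map g (X k)" for k
  proof (rule nth_equalityI)
    fix i assume "i < length (Y k)"
    then have "(X k ! i, Y k ! i) \<in> R" using len by (auto simp: R_def in_set_zip)
    then show "Y k ! i = map g (X k) ! i" using g(2) \<open>i < length (Y k)\<close> len by auto
  qed (simp add: len)
  then show ?thesis using g(1) by blast
qed

definition same_type :: "(nat \<Rightarrow> nat) \<Rightarrow> (nat \<Rightarrow> nat list set set) \<Rightarrow> nat list \<Rightarrow> nat list \<Rightarrow> bool" where
  "same_type d Q x y \<longleftrightarrow> length x = length y \<and>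
     (\<forall>\<phi>. fv \<phi> \<subseteq> {..<length x} \<longrightarrow> (sat d Q \<phi> (tuple_assign x) \<longleftrightarrow> sat d Q \<phi> (tuple_assign y)))"

lemma same_type_sym: "same_type d Q x y \<Longrightarrow> same_type d Q y x"
  by (auto simp: same_type_def)

lemma same_type_Aut:
  assumes "g \<in> Aut d Q"
  shows "same_type d Q x (map g x)"
  unfolding same_type_def
proof (intro conjI allI impI)
  fix \<phi> assume fv: "fv \<phi> \<subseteq> {..<length x}"
  have "sat d Q \<phi> (tuple_assign (map g x)) \<longleftrightarrow> sat d Q \<phi> (g \<circ> tuple_assign x)"
    by (rule sat_cong) (use fv in \<open>auto simp: tuple_assign_def\<close>)
  then show "sat d Q \<phi> (tuple_assign x) \<longleftrightarrow> sat d Q \<phi> (tuple_assign (map g x))"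
    using sat_Aut[OF assms] by simp
qed simp

lemma same_type_eq_iff:
  assumes "same_type d Q x y" "i < length x" "j < length x"
  shows "x ! i = x ! j \<longleftrightarrow> y ! i = y ! j"
proof -
  have "fv (FEq i j) \<subseteq> {..<length x}" using assms(2,3) by simp
  then have "sat d Q (FEq i j) (tuple_assign x) \<longleftrightarrow> sat d Q (FEq i j) (tuple_assign y)"
    using assms(1) unfolding same_type_def by blast
  moreover have "length y = length x" using assms(1) by (simp add: same_type_def)
  ultimately show ?thesis using assms(2,3) by (simp add: tuple_assign_def)
qed

lemma sat_tuple_assign_snoc:
  assumes "fv \<phi> \<subseteq> {..<Suc (length x)}"
  shows "sat d Q \<phi> (tuple_assign (x @ [c])) \<longleftrightarrow> sat d Q \<phi> ((tuple_assign x)(length x := c))"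
  by (rule sat_cong) (use assms in \<open>auto simp: tuple_assign_def nth_append\<close>)

text \<open>If no z
  worked, the countable conjunction of formulas refuting every z, existentially quantified,
  would hold of x but not of y.\<close>

lemma same_type_extend:
  assumes xy: "same_type d Q x y"
  shows "\<exists>z. same_type d Q (x @ [c]) (y @ [z])"
proof (rule ccontr)
  assume "\<nexists>z. same_type d Q (x @ [c]) (y @ [z])"
  then have "\<forall>z. \<exists>\<psi>. fv \<psi> \<subseteq> {..<Suc (length x)} \<and>
      sat d Q \<psi> (tuple_assign (x @ [c])) \<and> \<not> sat d Q \<psi> (tuple_assign (y @ [z]))"
    using xy unfolding same_type_def
    by simp (metis sat.simps(2) fv.simps(2))
  then obtain \<psi> where \<psi>: "\<And>z. fv (\<psi> z) \<subseteq> {..<Suc (length x)}"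
    "\<And>z. sat d Q (\<psi> z) (tuple_assign (x @ [c]))" "\<And>z. \<not> sat d Q (\<psi> z) (tuple_assign (y @ [z]))"
    by metis
  define \<Phi> where "\<Phi> = FEx (length x) (conj_over UNIV \<psi>)"
  have "fv \<Phi> \<subseteq> {..<length x}"
    using fv_conj_over[of UNIV \<psi>] \<psi>(1) by (fastforce simp: \<Phi>_def)
  moreover have "sat d Q \<Phi> (tuple_assign x)"
    using \<psi>(1,2) sat_tuple_assign_snoc by (auto simp: \<Phi>_def sat_conj_over)
  ultimately have "sat d Q \<Phi> (tuple_assign y)" using xy by (simp add: same_type_def)
  then obtain z where "\<forall>z'. sat d Q (\<psi> z') ((tuple_assign y)(length y := z))"
    using xy by (auto simp: \<Phi>_def sat_conj_over same_type_def)
  then have "sat d Q (\<psi> z) (tuple_assign (y @ [z]))"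
    using \<psi>(1) sat_tuple_assign_snoc xy by (metis same_type_def)
  then show False using \<psi>(3) by blast
qed

text \<open>The back-and-forth construction, adding the number k on the left and then on the right
  at stage k.\<close>

definition forth :: "(nat \<Rightarrow> nat) \<Rightarrow> (nat \<Rightarrow> nat list set set) \<Rightarrow> nat list \<Rightarrow> nat list \<Rightarrow> nat \<Rightarrow> nat" where
  "forth d Q x y c = (SOME z. same_type d Q (x @ [c]) (y @ [z]))"

lemma same_type_forth:
  "same_type d Q x y \<Longrightarrow> same_type d Q (x @ [c]) (y @ [forth d Q x y c])"
  unfolding forth_def using same_type_extend by (rule someI_ex)

fun bf_step :: "(nat \<Rightarrow> nat) \<Rightarrow> (nat \<Rightarrow> nat list set set) \<Rightarrow> nat \<Rightarrow> nat list \<times> nat list \<Rightarrow> nat list \<times> nat list" where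
  "bf_step d Q k (x, y) =
     (let x' = x @ [k]; y' = y @ [forth d Q x y k] in (x' @ [forth d Q y' x' k], y' @ [k]))"

primrec bf_chain :: "(nat \<Rightarrow> nat) \<Rightarrow> (nat \<Rightarrow> nat list set set) \<Rightarrow> nat list \<Rightarrow> nat list \<Rightarrow> nat \<Rightarrow> nat list \<times> nat list" where
  "bf_chain d Q a b 0 = (a, b)"
| "bf_chain d Q a b (Suc k) = bf_step d Q k (bf_chain d Q a b k)"

lemma bf_chain_same_type:
  assumes "same_type d Q a b"
  shows "same_type d Q (fst (bf_chain d Q a b k)) (snd (bf_chain d Q a b k))"
proof (induction k)
  case (Suc k)
  obtain x y where xy: "bf_chain d Q a b k = (x, y)" by fastforce
  then have "same_type d Q (y @ [forth d Q x y k]) (x @ [k])"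
    using Suc same_type_forth same_type_sym by simp
  then have "same_type d Q (y @ [forth d Q x y k, k]) (x @ [k, forth d Q (y @ [forth d Q x y k]) (x @ [k]) k])"
    using same_type_forth by fastforce
  then show ?case using same_type_sym xy by (simp add: Let_def)
qed (simp add: assms)

lemma bf_chain_prefix:
  "prefix (fst (bf_chain d Q a b k)) (fst (bf_chain d Q a b (Suc k)))"
  "prefix (snd (bf_chain d Q a b k)) (snd (bf_chain d Q a b (Suc k)))"
  by (cases "bf_chain d Q a b k"; simp add: Let_def)+

lemma bf_chain_covers:
  "k \<in> set (fst (bf_chain d Q a b (Suc k)))" "k \<in> set (snd (bf_chain d Q a b (Suc k)))"
  by (cases "bf_chain d Q a b k"; simp add: Let_def)+

lemma back_and_forth:
  assumes ab: "same_type d Q a b"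
  shows "\<exists>g. bij g \<and> map g a = b \<and>
    (\<forall>E. finite E \<longrightarrow> (\<exists>c. E \<subseteq> set c \<and> same_type d Q c (map g c)))"
proof -
  define X where "X k = fst (bf_chain d Q a b k)" for k
  define Y where "Y k = snd (bf_chain d Q a b k)" for k
  have XY: "same_type d Q (X k) (Y k)" for k
    using bf_chain_same_type[OF ab] by (simp add: X_def Y_def)
  have "\<exists>g. bij g \<and> (\<forall>k. Y k = map g (X k))"
  proof (rule limit_bijection)
    show "length (X k) = length (Y k)" for k using XY by (simp add: same_type_def)
    show "X k ! i = X k ! j \<longleftrightarrow> Y k ! i = Y k ! j" if "i < length (X k)" "j < length (X k)" for k i j
      using same_type_eq_iff[OF XY that] .
    show "\<exists>k. x \<in> set (X k)" "\<exists>k. y \<in> set (Y k)" for x y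
      using bf_chain_covers unfolding X_def Y_def by blast+
  qed (use bf_chain_prefix in \<open>simp_all add: X_def Y_def del: bf_chain.simps\<close>)
  then obtain g where g: "bij g" "\<And>k. Y k = map g (X k)" by blast
  have "\<exists>c. E \<subseteq> set c \<and> same_type d Q c (map g c)" if "finite E" for E
  proof
    define K where "K = Suc (Max (insert 0 E))"
    have "set (X (Suc n)) \<subseteq> set (X K)" if "n \<in> E" for n
      using \<open>finite E\<close> that prefix_chain_mono[of X "Suc n" K] bf_chain_prefix(1)
      by (simp add: K_def X_def set_mono_prefix)
    then show "E \<subseteq> set (X K) \<and> same_type d Q (X K) (map g (X K))"
      using bf_chain_covers(1) XY[of K] g(2)[of K] by (fastforce simp: X_def)
  qed
  moreover have "map g a = b" using g(2)[of 0] by (simp add: X_def Y_def)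
  ultimately show ?thesis using g(1) by blast
qed

definition eq_vars :: "nat \<Rightarrow> nat list \<Rightarrow> form" where
  "eq_vars N ix = conj_over {..<length ix} (\<lambda>l. FEq (N + l) (ix ! l))"

lemma sat_eq_vars: "sat d Q (eq_vars N ix) e \<longleftrightarrow> (\<forall>l<length ix. e (N + l) = e (ix ! l))"
  by (auto simp: eq_vars_def sat_conj_over)

lemma fv_eq_vars: "fv (eq_vars N ix) \<subseteq> {N..<N + length ix} \<union> set ix"
  using fv_conj_over[of "{..<length ix}" "\<lambda>l. FEq (N + l) (ix ! l)"] by (auto simp: eq_vars_def)

definition pos :: "nat list \<Rightarrow> nat \<Rightarrow> nat" where
  "pos c x = (SOME j. j < length c \<and> c ! j = x)"

lemma pos: "x \<in> set c \<Longrightarrow> pos c x < length c \<and> c ! pos c x = x"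
  unfolding pos_def by (rule someI_ex) (simp add: in_set_conv_nth)

lemma sat_eq_vars_pos:
  assumes "length as = length w" "set w \<subseteq> set c"
  shows "sat d Q (eq_vars (length c) (map (pos c) w))
      (upd_list (tuple_assign (map h c)) [length c..<length c + length w] as) \<longleftrightarrow> as = map h w"
proof -
  let ?u = "upd_list (tuple_assign (map h c)) [length c..<length c + length w] as"
  have "?u (length c + l) = as ! l" if "l < length w" for l
    using that assms(1) by (simp add: upd_list_block)
  moreover have "?u (pos c (w ! l)) = h (w ! l)" if "l < length w" for l
  proof -
    have "w ! l \<in> set c" using that assms(2) nth_mem by blast
    then show ?thesis
      using pos[of "w ! l" c] assms(1) by (simp add: upd_list_block tuple_assign_def)
  qed
  ultimately have "(\<forall>l<length w. ?u (length c + l) = ?u (map (pos c) w ! l)) \<longleftrightarrow>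
      (\<forall>l<length w. as ! l = h (w ! l))"
    by simp
  moreover have "as = map h w \<longleftrightarrow> (\<forall>l<length w. as ! l = h (w ! l))"
    using assms(1) by (simp add: list_eq_iff_nth_eq)
  ultimately show ?thesis by (simp add: sat_eq_vars)
qed

text \<open>The formula Q_i x (AND_{w\<in>W} x \<noteq> w), where the block x of fresh variables starts after the
  variables of c and each entry of w is named by one of its positions in c.\<close>

definition cofinite_formula :: "(nat \<Rightarrow> nat) \<Rightarrow> nat \<Rightarrow> nat list \<Rightarrow> nat list set \<Rightarrow> form" where
  "cofinite_formula d i c W =
     FQ i [length c..<length c + d i] (conj_over W (\<lambda>w. FNeg (eq_vars (length c) (map (pos c) w))))"

lemma fv_cofinite_formula:
  assumes W_tuples: "W \<subseteq> tuples (d i)" and W_in_c: "\<forall>w\<in>W. set w \<subseteq> set c"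
  shows "fv (cofinite_formula d i c W) \<subseteq> {..<length c}"
proof -
  let ?N = "length c"
  have "fv (FNeg (eq_vars ?N (map (pos c) w))) \<subseteq> {..<?N + d i}" if w: "w \<in> W" for w
  proof -
    have "set (map (pos c) w) \<subseteq> {..<?N}" using w W_in_c pos by auto
    moreover have "length w = d i" using w W_tuples by (auto simp: tuples_def)
    ultimately have "{?N..<?N + length (map (pos c) w)} \<union> set (map (pos c) w) \<subseteq> {..<?N + d i}"
      by auto
    then show ?thesis using fv_eq_vars[of ?N "map (pos c) w"] by (metis fv.simps(2) order_trans)
  qed
  then have "(\<Union>w\<in>W. fv (FNeg (eq_vars ?N (map (pos c) w)))) \<subseteq> {..<?N + d i}"
    by (rule UN_least)
  then have "fv (conj_over W (\<lambda>w. FNeg (eq_vars ?N (map (pos c) w)))) \<subseteq> {..<?N + d i}"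
    by (rule order_trans[OF fv_conj_over])
  then show ?thesis by (auto simp: cofinite_formula_def)
qed

lemma sat_cofinite_formula:
  assumes W_tuples: "W \<subseteq> tuples (d i)" and W_in_c: "\<forall>w\<in>W. set w \<subseteq> set c"
  shows "sat d Q (cofinite_formula d i c W) (tuple_assign (map h c)) \<longleftrightarrow> tuples (d i) - map h ` W \<in> Q i"
proof -
  let ?N = "length c" and ?u = "upd_list (tuple_assign (map h c)) [length c..<length c + d i]"
  let ?body = "conj_over W (\<lambda>w. FNeg (eq_vars ?N (map (pos c) w)))"
  have "sat d Q ?body (?u as) \<longleftrightarrow> as \<notin> map h ` W" if "length as = d i" for as
  proof -
    have "sat d Q (eq_vars ?N (map (pos c) w)) (?u as) \<longleftrightarrow> as = map h w" if "w \<in> W" for w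
    proof -
      have "length w = d i" "set w \<subseteq> set c"
        using that W_tuples W_in_c by (auto simp: tuples_def)
      then show ?thesis using sat_eq_vars_pos[of as w c d Q h] \<open>length as = d i\<close> by simp
    qed
    then show ?thesis unfolding sat_conj_over sat.simps by blast
  qed
  then have defined_set: "{as \<in> tuples (d i). sat d Q ?body (?u as)} = tuples (d i) - map h ` W"
    by (auto simp: tuples_def)
  show ?thesis unfolding cofinite_formula_def sat.simps defined_set by simp
qed

lemma orbit_eq_type_class:
  assumes hyp: "\<forall>i. fin_bool_comb_principal (d i) (Q i)"
  shows "orbit_tuple (Aut d Q) a = {b \<in> tuples (length a). same_type d Q a b}"
proof (intro equalityI subsetI)
  fix b assume "b \<in> orbit_tuple (Aut d Q) a"
  then show "b \<in> {b \<in> tuples (length a). same_type d Q a b}"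
    using same_type_Aut by (auto simp: orbit_tuple_def tuples_def)
next
  fix b assume "b \<in> {b \<in> tuples (length a). same_type d Q a b}"
  then obtain g where g: "bij g" "map g a = b"
    and local_type: "\<And>E. finite E \<Longrightarrow> \<exists>c. E \<subseteq> set c \<and> same_type d Q c (map g c)"
    using back_and_forth by blast
  have "preserves_cofinite (d i) (Q i) g W" if W: "finite W" "W \<subseteq> tuples (d i)" for i W
  proof -
    obtain c where c: "\<Union> (set ` W) \<subseteq> set c" "same_type d Q c (map g c)"
      using local_type[of "\<Union> (set ` W)"] W(1) by auto
    then have W_in_c: "\<forall>w\<in>W. set w \<subseteq> set c" by auto
    let ?\<phi> = "cofinite_formula d i c W"
    have "sat d Q ?\<phi> (tuple_assign (map id c)) \<longleftrightarrow> sat d Q ?\<phi> (tuple_assign (map g c))"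
      using c(2) fv_cofinite_formula[of W d i c, OF W(2) W_in_c] by (simp add: same_type_def)
    then show ?thesis
      unfolding sat_cofinite_formula[of W d i c, OF W(2) W_in_c] by (simp add: preserves_cofinite_def)
  qed
  then have "g \<in> Aut d Q" using Aut_iff_preserves_cofinite[OF hyp g(1)] by blast
  then show "b \<in> orbit_tuple (Aut d Q) a" using g(2) by (auto simp: orbit_tuple_def)
qed

lemma distinguishing_formula:
  assumes "\<not> same_type d Q a b" "length b = length a"
  shows "\<exists>\<psi>. fv \<psi> \<subseteq> {..<length a} \<and> sat d Q \<psi> (tuple_assign a) \<and> \<not> sat d Q \<psi> (tuple_assign b)"
proof -
  obtain \<phi> where \<phi>: "fv \<phi> \<subseteq> {..<length a}"
    "\<not> (sat d Q \<phi> (tuple_assign a) \<longleftrightarrow> sat d Q \<phi> (tuple_assign b))"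
    using assms unfolding same_type_def by auto
  show ?thesis
  proof (cases "sat d Q \<phi> (tuple_assign a)")
    case True
    then show ?thesis using \<phi> by blast
  next
    case False
    then show ?thesis using \<phi> by (intro exI[of _ "FNeg \<phi>"]) auto
  qed
qed

text \<open>Type classes are definable: conjoin, over the countably many tuples of a different type,
  a formula true of a and false of that tuple.\<close>

lemma type_class_definable:
  "definable d Q (length a) {b \<in> tuples (length a). same_type d Q a b}"
proof -
  let ?n = "length a"
  define Other where "Other = {b \<in> tuples ?n. \<not> same_type d Q a b}"
  have "\<forall>b\<in>Other. \<exists>\<psi>. fv \<psi> \<subseteq> {..<?n} \<and> sat d Q \<psi> (tuple_assign a) \<and> \<not> sat d Q \<psi> (tuple_assign b)"
    using distinguishing_formula by (simp add: Other_def tuples_def)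
  then obtain \<psi> where \<psi>: "\<And>b. b \<in> Other \<Longrightarrow>
      fv (\<psi> b) \<subseteq> {..<?n} \<and> sat d Q (\<psi> b) (tuple_assign a) \<and> \<not> sat d Q (\<psi> b) (tuple_assign b)"
    using bchoice by metis
  define \<Phi> where "\<Phi> = conj_over Other \<psi>"
  have "fv \<Phi> \<subseteq> {..<?n}"
    using fv_conj_over[of Other \<psi>] \<psi> unfolding \<Phi>_def by blast
  moreover have "same_type d Q a b \<longleftrightarrow> sat d Q \<Phi> (tuple_assign b)" if "b \<in> tuples ?n" for b
  proof
    assume ab: "same_type d Q a b"
    have "sat d Q (\<psi> b') (tuple_assign b)" if "b' \<in> Other" for b'
      using \<psi>[OF that] ab unfolding same_type_def by blast
    then show "sat d Q \<Phi> (tuple_assign b)" by (simp add: \<Phi>_def sat_conj_over)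
  next
    assume "sat d Q \<Phi> (tuple_assign b)"
    then show "same_type d Q a b"
      using \<psi>[of b] that by (auto simp: \<Phi>_def sat_conj_over Other_def)
  qed
  ultimately show ?thesis unfolding definable_def by blast
qed

theorem proposition23:
  fixes d :: "nat \<Rightarrow> nat" and Q :: "nat \<Rightarrow> nat list set set"
  assumes "\<forall>i. fin_bool_comb_principal (d i) (Q i)"
  shows "subgroup (Aut d Q) (BijGroup (UNIV :: nat set))
     \<and> closedin (top_of_set Sinf) (Aut d Q)
     \<and> (\<forall>a :: nat list. definable d Q (length a) (orbit_tuple (Aut d Q) a))"
  using subgroup_Aut closed_Aut[OF assms] type_class_definable orbit_eq_type_class[OF assms]
  by simp

end
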